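(* Suppose that $$\frac{\Gamma,\rho\dashv\sigma\vartriangleright\rho_1\dashv\sigma_1\quad\cdots\quad\Gamma,\rho\dashv\sigma\vartriangleright\rho_n\dashv\sigma_n}{\Gamma\vartriangleright\rho\dashv\sigma}$$ is an instance of rule $(+,+)$, $(\oplus,+)$ or $(+,\oplus)$ of the formal system for compliance. Then for all histories $\vec\delta,\vec\gamma$ and for all $i=1,\dots,n$ there exist histories $\vec\delta_i,\vec\gamma_i$ such that $\langle\vec\delta,\rho\rangle\parallel\langle\vec\gamma,\sigma\rangle$ reduces in zero or more steps to $\langle\vec\delta_i,\rho_i\rangle\parallel\langle\vec\gamma_i,\sigma_i\rangle$ by a reduction sequence in which rule (rbk) is never used.
   Context: Let $\mathcal N$ be a countable set of names and $\overline{\mathcal N}=\{\bar a\mid a\in\mathcal N\}$ a disjoint set of conames; $\alpha$ ranges over $\mathcal N\cup\overline{\mathcal N}$, with $\bar{\bar a}=a$. Retractable contracts are the closed expressions generated by $\sigma ::= \mathbf 1 \mid \sum_{i\in I} a_i.\sigma_i \ (\text{input}) \mid \sum_{i\in I}\bar a_i.\sigma_i\ (\text{retractable output}) \mid \bigoplus_{i\in I}\bar a_i.\sigma_i\ (\text{unretractable output}) \mid x \mid \mathsf{rec}\,x.\sigma$, where $I$ is non-empty and finite, names/conames in each choice are pairwise distinct, and $\sigma$ is not a variable in $\mathsf{rec}\,x.\sigma$. Choices are commutative; $\mathsf{rec}\,x.\sigma$ is identified with $\sigma[\mathsf{rec}\,x.\sigma/x]$. A unary $\bar a.\sigma$ may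 be read as either kind of output. Histories are stacks $\vec\gamma ::= [\,] \mid \vec\gamma:\sigma$ with $\sigma$ a retractable contract or the special symbol $\circ$. A contract with history is a pair $\langle\vec\gamma,\sigma\rangle$ with $\sigma$ a contract or $\circ$. Transitions: $\langle\vec\gamma,\alpha.\sigma+\sigma'\rangle\xrightarrow{\alpha}\langle\vec\gamma:\sigma',\sigma\rangle$ (for retractable choices, $+$ being input or retractable output sum); $\langle\vec\gamma,\bar a.\sigma\oplus\sigma'\rangle\xrightarrow{\tau}\langle\vec\gamma,\bar a.\sigma\rangle$; $\langle\vec\gamma,\alpha.\sigma\rangle\xrightarrow{\alpha}\langle\vec\gamma:\circ,\sigma\rangle$; $\langle\vec\gamma:\sigma',\sigma\rangle\xrightarrow{\mathsf{rb}}\langle\vec\gamma,\sigma'\rangle$. Client/server pairs $\langle\vec\delta,\rho\rangle\parallel\langle\vec\gamma,\sigma\rangle$ reduce by: (comm) if $\langle\vec\delta,\rho\rangle\xrightarrow{\alpha}\langle\vec\delta',\rho'\rangle$ and $\langle\vec\gamma,\sigma\rangle\xrightarrow{\bar\alpha}\langle\vec\gamma',\sigma'\rangle$ then the pair reduces to $\langle\vec\delta',\rho'\rangle\parallel\langle\vec\gamma',\sigma'\rangle$; ($\tau$) a $\tau$-transition of either component alone; (rbk) if both components do an $\mathsf{rb}$ transition and $\rho\neq\mathbf 1$, both roll back simultaneously; rule (rbk) applies only if neither (comm) nor ($\tau$) applies. Rules of the formal system (judgments $\Gamma\vartriangleright\rho\dashv\sigma$, $\Gamma$ a set of expressions $\rho'\dashv\sigma'$;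 applied modulo fold/unfold of recursion): $(+,+)$ if $\rho=\sum_{i\in I}\alpha_i.\rho_i$, $\sigma=\sum_{j\in J}\bar\alpha_j.\sigma_j$ are retractable choices and $k\in I\cap J$, from $\Gamma,\rho\dashv\sigma\vartriangleright\rho_k\dashv\sigma_k$ infer $\Gamma\vartriangleright\rho\dashv\sigma$; $(\oplus,+)$ from $\Gamma,\bigoplus_{i\in I}\bar a_i.\rho_i\dashv\sum_{j\in I\cup J}a_j.\sigma_j\vartriangleright\rho_i\dashv\sigma_i$ for all $i\in I$ infer $\Gamma\vartriangleright\bigoplus_{i\in I}\bar a_i.\rho_i\dashv\sum_{j\in I\cup J}a_j.\sigma_j$; $(+,\oplus)$ from $\Gamma,\sum_{j\in I\cup J}a_j.\sigma_j\dashv\bigoplus_{i\in I}\bar a_i.\rho_i\vartriangleright\rho_i\dashv\sigma_i$ for all $i\in I$ infer $\Gamma\vartriangleright\sum_{j\in I\cup J}a_j.\sigma_j\dashv\bigoplus_{i\in I}\bar a_i.\rho_i$. *)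

theory Defs
  imports Main
begin

text \<open>A choice is a non-empty list of (name, continuation) pairs (order irrelevant:
  every construction below picks an arbitrary member of the list).\<close>

datatype 'n ctr =
    One
  | InS "('n \<times> 'n ctr) list"
  | ROut "('n \<times> 'n ctr) list"    \<comment> \<open>retractable output sum  \<Sum> abar_i.\<sigma>_i\<close>
  | UOut "('n \<times> 'n ctr) list"    \<comment> \<open>unretractable output  \<Oplus> abar_i.\<sigma>_i\<close>
  | Var nat
  | Rec nat "'n ctr"

datatype 'n act = N 'n | Co 'n

fun dual :: "'n act \<Rightarrow> 'n act" where
  "dual (N a) = Co a"
| "dual (Co a) = N a"

fun fv :: "'n ctr \<Rightarrow> nat set" where
  "fv One = {}"
| "fv (InS xs) = (\<Union>p\<in>set xs. fv (snd p))"
| "fv (ROut xs) = (\<Union>p\<in>set xs. fv (snd p))"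
| "fv (UOut xs) = (\<Union>p\<in>set xs. fv (snd p))"
| "fv (Var x) = {x}"
| "fv (Rec x b) = fv b - {x}"

fun ok :: "'n ctr \<Rightarrow> bool" where
  "ok One = True"
| "ok (InS xs) = (xs \<noteq> [] \<and> distinct (map fst xs) \<and> (\<forall>p\<in>set xs. ok (snd p)))"
| "ok (ROut xs) = (xs \<noteq> [] \<and> distinct (map fst xs) \<and> (\<forall>p\<in>set xs. ok (snd p)))"
| "ok (UOut xs) = (xs \<noteq> [] \<and> distinct (map fst xs) \<and> (\<forall>p\<in>set xs. ok (snd p)))"
| "ok (Var x) = True"
| "ok (Rec x b) = ((\<forall>y. b \<noteq> Var y) \<and> ok b)"

definition contract :: "'n ctr \<Rightarrow> bool" where
  "contract s \<longleftrightarrow> ok s \<and> fv s = {}"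

text \<open>Substitution of a closed contract u for variable x.\<close>
fun subst :: "nat \<Rightarrow> 'n ctr \<Rightarrow> 'n ctr \<Rightarrow> 'n ctr" where
  "subst x u One = One"
| "subst x u (InS xs) = InS (map (\<lambda>(a,t). (a, subst x u t)) xs)"
| "subst x u (ROut xs) = ROut (map (\<lambda>(a,t). (a, subst x u t)) xs)"
| "subst x u (UOut xs) = UOut (map (\<lambda>(a,t). (a, subst x u t)) xs)"
| "subst x u (Var y) = (if x = y then u else Var y)"
| "subst x u (Rec y b) = (if x = y then Rec y b else Rec y (subst x u b))"

inductive unf :: "'n ctr \<Rightarrow> 'n ctr \<Rightarrow> bool" where
  unf_refl: "unf s s"
| unf_rec: "unf (subst x (Rec x b) b) s \<Longrightarrow> unf (Rec x b) s"

text \<open>View of a contract as a retractable choice (input sum, retractable output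
  sum, or a unary output which may be read as either kind).\<close>
fun rview :: "'n ctr \<Rightarrow> ('n act \<times> 'n ctr) list option" where
  "rview (InS xs) = Some (map (\<lambda>(a,t). (N a, t)) xs)"
| "rview (ROut xs) = Some (map (\<lambda>(a,t). (Co a, t)) xs)"
| "rview (UOut [p]) = Some [(Co (fst p), snd p)]"
| "rview _ = None"

text \<open>View of a contract as an unretractable output choice (unary retractable
  outputs may be read as unretractable ones).\<close>
fun uview :: "'n ctr \<Rightarrow> ('n \<times> 'n ctr) list option" where
  "uview (UOut xs) = Some xs"
| "uview (ROut [p]) = Some [p]"
| "uview _ = None"

datatype 'n hel = Circ | C "'n ctr"

type_synonym 'n hist = "'n hel list"   \<comment> \<open>stack, top = head of the list\<close>
type_synonym 'n hstate = "'n hist \<times> 'n hel"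

datatype 'n lbl = Act "'n act" | Tau | Rb

inductive hstep :: "'n hstate \<Rightarrow> 'n lbl \<Rightarrow> 'n hstate \<Rightarrow> bool" where
  in_sum: "\<lbrakk>unf s (InS xs); xs = ys @ (a,t) # zs; ys @ zs \<noteq> []\<rbrakk>
     \<Longrightarrow> hstep (g, C s) (Act (N a)) (C (InS (ys @ zs)) # g, C t)"
| rout_sum: "\<lbrakk>unf s (ROut xs); xs = ys @ (a,t) # zs; ys @ zs \<noteq> []\<rbrakk>
     \<Longrightarrow> hstep (g, C s) (Act (Co a)) (C (ROut (ys @ zs)) # g, C t)"
| tau: "\<lbrakk>unf s (UOut xs); (a,t) \<in> set xs; length xs \<ge> 2\<rbrakk>
     \<Longrightarrow> hstep (g, C s) Tau (g, C (UOut [(a,t)]))"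
| in_unary: "unf s (InS [(a,t)]) \<Longrightarrow> hstep (g, C s) (Act (N a)) (Circ # g, C t)"
| rout_unary: "unf s (ROut [(a,t)]) \<Longrightarrow> hstep (g, C s) (Act (Co a)) (Circ # g, C t)"
| uout_unary: "unf s (UOut [(a,t)]) \<Longrightarrow> hstep (g, C s) (Act (Co a)) (Circ # g, C t)"
| rb: "hstep (h # g, x) Rb (g, h)"

type_synonym 'n cs = "'n hstate \<times> 'n hstate"   \<comment> \<open>(client, server)\<close>

datatype rl = Comm | TauR | Rbk

inductive red_ct :: "'n cs \<Rightarrow> rl \<Rightarrow> 'n cs \<Rightarrow> bool" where
  comm: "\<lbrakk>hstep c (Act \<alpha>) c'; hstep s (Act (dual \<alpha>)) s'\<rbrakk> \<Longrightarrow> red_ct (c, s) Comm (c', s')"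
| tau_l: "hstep c Tau c' \<Longrightarrow> red_ct (c, s) TauR (c', s)"
| tau_r: "hstep s Tau s' \<Longrightarrow> red_ct (c, s) TauR (c, s')"

inductive red :: "'n cs \<Rightarrow> rl \<Rightarrow> 'n cs \<Rightarrow> bool" where
  red_ct: "red_ct x r y \<Longrightarrow> red x r y"
| rbk: "\<lbrakk>hstep c Rb c'; hstep s Rb s'; snd c \<noteq> C One; \<not> (\<exists>r y. red_ct (c, s) r y)\<rbrakk>
     \<Longrightarrow> red (c, s) Rbk (c', s')"

definition red_no_rbk :: "'n cs \<Rightarrow> 'n cs \<Rightarrow> bool" where
  "red_no_rbk x y \<longleftrightarrow> (\<exists>r. r \<noteq> Rbk \<and> red x r y)"

type_synonym 'n env = "('n ctr \<times> 'n ctr) set"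

text \<open>rule_inst G \<rho> \<sigma> ps: there is an instance of one of the three rules with
  conclusion G \<rhd> \<rho> \<dashv> \<sigma> and premises ps (list of (environment, client, server)),
  applied modulo unfolding of \<rho> and \<sigma>.\<close>
inductive rule_inst :: "'n env \<Rightarrow> 'n ctr \<Rightarrow> 'n ctr \<Rightarrow> ('n env \<times> 'n ctr \<times> 'n ctr) list \<Rightarrow> bool" where
  plus_plus: "\<lbrakk>unf \<rho> \<rho>0; unf \<sigma> \<sigma>0; rview \<rho>0 = Some xs; rview \<sigma>0 = Some ys;
      (\<alpha>, \<rho>k) \<in> set xs; (dual \<alpha>, \<sigma>k) \<in> set ys\<rbrakk>
    \<Longrightarrow> rule_inst G \<rho> \<sigma> [(insert (\<rho>, \<sigma>) G, \<rho>k, \<sigma>k)]"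
| oplus_plus: "\<lbrakk>unf \<rho> \<rho>0; unf \<sigma> (InS ys); uview \<rho>0 = Some xs;
      set (map fst xs) \<subseteq> set (map fst ys);
      list_all2 (\<lambda>(a, \<rho>a) (G', \<rho>', \<sigma>'). G' = insert (\<rho>, \<sigma>) G \<and> \<rho>' = \<rho>a \<and> (a, \<sigma>') \<in> set ys) xs ps\<rbrakk>
    \<Longrightarrow> rule_inst G \<rho> \<sigma> ps"
| plus_oplus: "\<lbrakk>unf \<rho> (InS ys); unf \<sigma> \<sigma>0; uview \<sigma>0 = Some xs;
      set (map fst xs) \<subseteq> set (map fst ys);
      list_all2 (\<lambda>(a, \<sigma>a) (G', \<rho>', \<sigma>'). G' = insert (\<rho>, \<sigma>) G \<and> \<sigma>' = \<sigma>a \<and> (a, \<rho>') \<in> set ys) xs ps\<rbrakk>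
    \<Longrightarrow> rule_inst G \<rho> \<sigma> ps"

definition history :: "'n hist \<Rightarrow> bool" where
  "history h \<longleftrightarrow> (\<forall>e\<in>set h. e = Circ \<or> (\<exists>s. e = C s \<and> contract s))"

end

theory Submission
  imports Defs
begin

text \<open>Every premise of the three rules is reached by at most two reductions, neither of
  which is a rollback. For (+,+) both sides commit synchronously to the chosen branch.
  For (\<oplus>,+) and (+,\<oplus>) the unretractable side first selects the branch internally by a
  \<open>\<tau>\<close>-step (unless the choice is already unary) and then synchronises with the input
  sum, which offers every name of the output choice.\<close>

abbreviation tau_steps :: "'n hstate \<Rightarrow> 'n hstate \<Rightarrow> bool" where
  "tau_steps \<equiv> (\<lambda>x y. hstep x Tau y)\<^sup>*\<^sup>*"

lemma red_no_rbk_comm: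
  assumes "hstep c (Act \<alpha>) c'" and "hstep s (Act (dual \<alpha>)) s'"
  shows "red_no_rbk (c, s) (c', s')"
  unfolding red_no_rbk_def using assms by (blast intro: red.red_ct red_ct.comm)

lemma red_no_rbk_tau_client:
  assumes "tau_steps c c'"
  shows "red_no_rbk\<^sup>*\<^sup>* (c, s) (c', s)"
  using assms
proof induction
  case (step c' c'')
  then have "red_no_rbk (c', s) (c'', s)"
    unfolding red_no_rbk_def by (blast intro: red.red_ct red_ct.tau_l)
  with step.IH show ?case by simp
qed simp

lemma red_no_rbk_tau_server:
  assumes "tau_steps s s'"
  shows "red_no_rbk\<^sup>*\<^sup>* (c, s) (c, s')"
  using assms
proof induction
  case (step s' s'')
  then have "red_no_rbk (c, s') (c, s'')"
    unfolding red_no_rbk_def by (blast intro: red.red_ct red_ct.tau_r)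
  with step.IH show ?case by simp
qed simp

lemma hstep_InS:
  assumes "unf s (InS xs)" and "(a, t) \<in> set xs"
  shows "\<exists>g'. hstep (g, C s) (Act (N a)) (g', C t)"
proof -
  obtain ys zs where xs: "xs = ys @ (a, t) # zs"
    using assms(2) by (metis split_list)
  show ?thesis
  proof (cases "ys @ zs = []")
    case True
    with assms(1) xs show ?thesis by (auto intro: in_unary)
  next
    case False
    with assms(1) xs show ?thesis by (metis in_sum)
  qed
qed

lemma hstep_ROut:
  assumes "unf s (ROut xs)" and "(a, t) \<in> set xs"
  shows "\<exists>g'. hstep (g, C s) (Act (Co a)) (g', C t)"
proof -
  obtain ys zs where xs: "xs = ys @ (a, t) # zs"
    using assms(2) by (metis split_list)
  show ?thesis
  proof (cases "ys @ zs = []")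
    case True
    with assms(1) xs show ?thesis by (auto intro: rout_unary)
  next
    case False
    with assms(1) xs show ?thesis by (metis rout_sum)
  qed
qed

lemma hstep_rview:
  assumes "unf s s0" and "rview s0 = Some xs" and "(\<alpha>, t) \<in> set xs"
  shows "\<exists>g'. hstep (g, C s) (Act \<alpha>) (g', C t)"
  using assms
proof (cases s0 rule: rview.cases)
  case (3 p)
  with assms have "\<alpha> = Co (fst p)" "t = snd p" by auto
  with assms(1) 3 show ?thesis by (metis uout_unary prod.collapse)
qed (auto intro: hstep_InS hstep_ROut)

lemma hstep_uview:
  assumes "unf s s0" and "uview s0 = Some xs" and "(a, t) \<in> set xs"
  shows "\<exists>c g'. tau_steps (g, C s) c \<and> hstep c (Act (Co a)) (g', C t)"
  using assms
proof (cases s0 rule: uview.cases)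
  case (1 ys)
  with assms have unf: "unf s (UOut xs)" by simp
  show ?thesis
  proof (cases "length xs \<ge> 2")
    case True
    have "tau_steps (g, C s) (g, C (UOut [(a, t)]))"
      using hstep.tau[OF unf assms(3) True] by blast
    moreover have "hstep (g, C (UOut [(a, t)])) (Act (Co a)) (Circ # g, C t)"
      by (intro uout_unary unf_refl)
    ultimately show ?thesis by blast
  next
    case False
    with assms(3) have "xs = [(a, t)]"
      by (cases xs; cases "tl xs") auto
    with unf show ?thesis by (blast intro: uout_unary)
  qed
next
  case (2 p)
  with assms have "hstep (g, C s) (Act (Co a)) (Circ # g, C t)"
    by (auto intro: rout_unary)
  then show ?thesis by blast
qed simp_all

lemma oplus_plus_reaches_premise:
  assumes "unf \<rho> \<rho>0" and "uview \<rho>0 = Some xs" and "(a, \<rho>a) \<in> set xs"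
    and "unf \<sigma> (InS ys)" and "(a, \<sigma>a) \<in> set ys"
  shows "\<exists>\<delta>' \<gamma>'. red_no_rbk\<^sup>*\<^sup>* ((\<delta>, C \<rho>), (\<gamma>, C \<sigma>)) ((\<delta>', C \<rho>a), (\<gamma>', C \<sigma>a))"
proof -
  obtain c \<delta>' where tau: "tau_steps (\<delta>, C \<rho>) c" and out: "hstep c (Act (Co a)) (\<delta>', C \<rho>a)"
    using hstep_uview[OF assms(1-3)] by blast
  obtain \<gamma>' where "hstep (\<gamma>, C \<sigma>) (Act (N a)) (\<gamma>', C \<sigma>a)"
    using hstep_InS[OF assms(4,5)] by blast
  with out have "red_no_rbk (c, (\<gamma>, C \<sigma>)) ((\<delta>', C \<rho>a), (\<gamma>', C \<sigma>a))"
    using red_no_rbk_comm[of c "Co a"] by simp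
  with red_no_rbk_tau_client[OF tau] show ?thesis
    by (blast intro: rtranclp.rtrancl_into_rtrancl)
qed

lemma plus_oplus_reaches_premise:
  assumes "unf \<rho> (InS ys)" and "(a, \<rho>a) \<in> set ys"
    and "unf \<sigma> \<sigma>0" and "uview \<sigma>0 = Some xs" and "(a, \<sigma>a) \<in> set xs"
  shows "\<exists>\<delta>' \<gamma>'. red_no_rbk\<^sup>*\<^sup>* ((\<delta>, C \<rho>), (\<gamma>, C \<sigma>)) ((\<delta>', C \<rho>a), (\<gamma>', C \<sigma>a))"
proof -
  obtain c \<gamma>' where tau: "tau_steps (\<gamma>, C \<sigma>) c" and out: "hstep c (Act (Co a)) (\<gamma>', C \<sigma>a)"
    using hstep_uview[OF assms(3-5)] by blast
  obtain \<delta>' where "hstep (\<delta>, C \<rho>) (Act (N a)) (\<delta>', C \<rho>a)"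
    using hstep_InS[OF assms(1,2)] by blast
  with out have "red_no_rbk ((\<delta>, C \<rho>), c) ((\<delta>', C \<rho>a), (\<gamma>', C \<sigma>a))"
    using red_no_rbk_comm[of _ "N a" _ c] by simp
  with red_no_rbk_tau_server[OF tau] show ?thesis
    by (blast intro: rtranclp.rtrancl_into_rtrancl)
qed

lemma list_all2_nth_witness:
  assumes "list_all2 P xs ys" and "i < length ys"
  shows "\<exists>x\<in>set xs. P x (ys ! i)"
  using assms list_all2_nthD2 list_all2_lengthD nth_mem by metis

theorem lemma2:
  fixes G :: "'n env" and \<rho> \<sigma> :: "'n ctr"
    and ps :: "('n env \<times> 'n ctr \<times> 'n ctr) list"
  assumes "contract \<rho>" and "contract \<sigma>"
    and "rule_inst G \<rho> \<sigma> ps"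
  shows "\<forall>\<delta> \<gamma>. history \<delta> \<longrightarrow> history \<gamma> \<longrightarrow>
           (\<forall>i < length ps. \<exists>\<delta>i \<gamma>i.
              red_no_rbk\<^sup>*\<^sup>* ((\<delta>, C \<rho>), (\<gamma>, C \<sigma>))
                ((\<delta>i, C (fst (snd (ps ! i)))), (\<gamma>i, C (snd (snd (ps ! i))))))"
proof (intro allI impI)
  fix \<delta> \<gamma> i
  assume i: "i < length ps"
  from assms(3) show "\<exists>\<delta>i \<gamma>i. red_no_rbk\<^sup>*\<^sup>* ((\<delta>, C \<rho>), (\<gamma>, C \<sigma>))
      ((\<delta>i, C (fst (snd (ps ! i)))), (\<gamma>i, C (snd (snd (ps ! i)))))"
  proof cases
    case (plus_plus \<rho>0 \<sigma>0 xs ys \<alpha> \<rho>k \<sigma>k)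
    then obtain \<delta>' \<gamma>' where "hstep (\<delta>, C \<rho>) (Act \<alpha>) (\<delta>', C \<rho>k)"
        and "hstep (\<gamma>, C \<sigma>) (Act (dual \<alpha>)) (\<gamma>', C \<sigma>k)"
      using hstep_rview by metis
    with plus_plus i show ?thesis by (auto dest: red_no_rbk_comm)
  next
    case (oplus_plus \<rho>0 ys xs)
    with i show ?thesis
      by (auto dest!: list_all2_nth_witness intro: oplus_plus_reaches_premise)
  next
    case (plus_oplus ys \<sigma>0 xs)
    with i show ?thesis
      by (auto dest!: list_all2_nth_witness intro: plus_oplus_reaches_premise)
  qed
qed

end
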